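(* Let $G$ be a finite group which is neither cyclic nor isomorphic to a direct product of a cyclic group of odd order and a generalized quaternion group. If $|Z(G)|$ has at least two distinct prime divisors, then the difference graph $\mathcal{D}(G)$ is connected and has diameter at most $5$.
   Context: For a finite group $G$ with identity $e$: the intersection power graph $\mathcal{G}_I(G)$ has vertex set $G$, two distinct non-identity vertices $x,y$ being adjacent iff $\langle x\rangle\cap\langle y\rangle\neq\{e\}$, and $e$ being adjacent to every other vertex. The power graph $\mathcal{P}(G)$ has vertex set $G$, two distinct vertices being adjacent iff one is a power of the other. The difference graph $\mathcal{D}(G)$ is the graph on vertex set $G$ with edge set $E(\mathcal{G}_I(G))\setminus E(\mathcal{P}(G))$, with all isolated vertices removed. $Z(G)$ denotes the center of $G$. The generalized quaternion group $Q_{2^n}$ ($n\ge 3$) is $\langle x,y\mid x^{2^{n-1}}=1,\ y^2=x^{2^{n-2}},\ y^{-1}xy=x^{-1}\rangle$. *)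

theory Defs
  imports "HOL-Algebra.Algebra"
begin

definition cyclic_group :: "('a, 'b) monoid_scheme \<Rightarrow> bool" where
  "cyclic_group G \<longleftrightarrow> (\<exists>x \<in> carrier G. generate G {x} = carrier G)"

definition grp_center :: "('a, 'b) monoid_scheme \<Rightarrow> 'a set" where
  "grp_center G = {z \<in> carrier G. \<forall>g \<in> carrier G. z \<otimes>\<^bsub>G\<^esub> g = g \<otimes>\<^bsub>G\<^esub> z}"

(* generalized quaternion group Q_{2^n}: element (i,s) stands for x^i y^s,
   0 <= i < 2^(n-1), s in {0,1}; relations x^(2^(n-1)) = 1, y^2 = x^(2^(n-2)),
   y^-1 x y = x^-1 (equivalently y x^j = x^-j y) *)
definition quaternion_group :: "nat \<Rightarrow> (int \<times> int) monoid" where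
  "quaternion_group n =
     (let N = (2::int) ^ (n - 1) in
      \<lparr>carrier = {0..<N} \<times> {0, 1},
       monoid.mult = (\<lambda>(i, s) (j, t).
          if s = 0 then ((i + j) mod N, t)
          else if t = 0 then ((i - j) mod N, 1)
          else ((i - j + 2 ^ (n - 2)) mod N, 0)),
       one = (0, 0)\<rparr>)"

definition ipg_adj :: "('a, 'b) monoid_scheme \<Rightarrow> 'a \<Rightarrow> 'a \<Rightarrow> bool" where
  "ipg_adj G x y \<longleftrightarrow> x \<in> carrier G \<and> y \<in> carrier G \<and> x \<noteq> y \<and>
     (x = \<one>\<^bsub>G\<^esub> \<or> y = \<one>\<^bsub>G\<^esub> \<or> generate G {x} \<inter> generate G {y} \<noteq> {\<one>\<^bsub>G\<^esub>})"

definition pg_adj :: "('a, 'b) monoid_scheme \<Rightarrow> 'a \<Rightarrow> 'a \<Rightarrow> bool" where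
  "pg_adj G x y \<longleftrightarrow> x \<in> carrier G \<and> y \<in> carrier G \<and> x \<noteq> y \<and>
     ((\<exists>k::nat. y = x [^]\<^bsub>G\<^esub> k) \<or> (\<exists>k::nat. x = y [^]\<^bsub>G\<^esub> k))"

definition diff_adj :: "('a, 'b) monoid_scheme \<Rightarrow> 'a \<Rightarrow> 'a \<Rightarrow> bool" where
  "diff_adj G x y \<longleftrightarrow> ipg_adj G x y \<and> \<not> pg_adj G x y"

definition diff_verts :: "('a, 'b) monoid_scheme \<Rightarrow> 'a set" where
  "diff_verts G = {x \<in> carrier G. \<exists>y. diff_adj G x y}"

definition diff_walk :: "('a, 'b) monoid_scheme \<Rightarrow> 'a list \<Rightarrow> bool" where
  "diff_walk G xs \<longleftrightarrow> xs \<noteq> [] \<and> set xs \<subseteq> diff_verts G \<and>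
     (\<forall>i. Suc i < length xs \<longrightarrow> diff_adj G (xs ! i) (xs ! Suc i))"

definition diff_connected :: "('a, 'b) monoid_scheme \<Rightarrow> bool" where
  "diff_connected G \<longleftrightarrow> diff_verts G \<noteq> {} \<and>
     (\<forall>u \<in> diff_verts G. \<forall>v \<in> diff_verts G.
        \<exists>xs. diff_walk G xs \<and> hd xs = u \<and> last xs = v)"

definition diff_diam_le :: "('a, 'b) monoid_scheme \<Rightarrow> nat \<Rightarrow> bool" where
  "diff_diam_le G d \<longleftrightarrow>
     (\<forall>u \<in> diff_verts G. \<forall>v \<in> diff_verts G.
        \<exists>xs. diff_walk G xs \<and> hd xs = u \<and> last xs = v \<and> length xs \<le> Suc d)"

end

(*
  Elements x, y are adjacent in D(G) iff their cyclic subgroups meet nontrivially while neither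
  contains the other.  So adjacency only depends on <x> and <y>, and the vertices of D(G) are
  the elements of composite order.

  Fix central elements a, b of distinct prime orders p, q.  A hub is a product w = g c of an
  element g of prime order with some c in {a, b} of another prime order; <w> is the direct product
  of <g> and <c>, so its only subgroups are 1, <g>, <c> and <w>.  Comparing which factors of one
  hub lie in the cyclic subgroup of another shows that two hubs generate the same subgroup or are
  at distance at most 2 (through the hub a b in the worst case).  A vertex u with some element of
  prime order outside <u> is adjacent to a hub, made of an element of prime order inside <u> and
  one outside.  If instead <u> contains every element of prime order, then, G not being cyclic,
  take y of minimal order outside <u>: <y> misses a or b, since otherwise y^p and y^q would lie in
  <u>, and hence so would y.  So u - y - hub, which gives distance at most 1 + 1 + 2 + 1; two
  vertices of the second kind are even at distance at most 2.
*)

theory Submission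
  imports Defs
begin

section \<open>Walks of bounded length\<close>

definition reachable_within :: "('a \<Rightarrow> 'a \<Rightarrow> bool) \<Rightarrow> nat \<Rightarrow> 'a \<Rightarrow> 'a \<Rightarrow> bool" where
  "reachable_within r n x y \<longleftrightarrow>
     (\<exists>xs. xs \<noteq> [] \<and> hd xs = x \<and> last xs = y \<and> length xs \<le> Suc n \<and> successively r xs)"

lemma reachable_within_refl: "reachable_within r n x x"
  unfolding reachable_within_def by (rule exI[of _ "[x]"]) auto

lemma reachable_within_Cons:
  assumes "r x y" and "reachable_within r n y z"
  shows "reachable_within r (Suc n) x z"
proof -
  obtain ys where "ys \<noteq> []" "hd ys = y" "last ys = z" "length ys \<le> Suc n" "successively r ys"
    using assms(2) unfolding reachable_within_def by blast
  then show ?thesis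
    using assms(1) unfolding reachable_within_def
    by (intro exI[of _ "x # ys"]) (auto simp: successively_Cons neq_Nil_conv)
qed

lemma reachable_within_edge: "r x y \<Longrightarrow> reachable_within r 1 x y"
  using reachable_within_Cons[OF _ reachable_within_refl] by simp

lemma reachable_within_two: "r x y \<Longrightarrow> r y z \<Longrightarrow> reachable_within r 2 x z"
  using reachable_within_Cons[OF _ reachable_within_edge] by (simp add: numeral_2_eq_2)

lemma reachable_within_mono:
  "reachable_within r m x y \<Longrightarrow> m \<le> n \<Longrightarrow> reachable_within r n x y"
  unfolding reachable_within_def by fastforce

lemma reachable_within_trans:
  assumes "reachable_within r m x y" and "reachable_within r n y z"
  shows "reachable_within r (m + n) x z"
proof -
  obtain xs ys where
    xs: "xs \<noteq> []" "hd xs = x" "last xs = y" "length xs \<le> Suc m" "successively r xs" and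
    ys: "ys \<noteq> []" "hd ys = y" "last ys = z" "length ys \<le> Suc n" "successively r ys"
    using assms unfolding reachable_within_def by blast
  have "successively r (xs @ tl ys)"
    using xs ys by (cases ys) (auto simp: successively_append_iff successively_Cons neq_Nil_conv)
  moreover have "last (xs @ tl ys) = z"
    using xs ys by (cases ys) auto
  ultimately show ?thesis
    using xs ys unfolding reachable_within_def by (intro exI[of _ "xs @ tl ys"]) auto
qed

lemma reachable_within_sym:
  assumes "symp r" and "reachable_within r n x y"
  shows "reachable_within r n y x"
proof -
  obtain xs where "xs \<noteq> []" "hd xs = x" "last xs = y" "length xs \<le> Suc n" "successively r xs"
    using assms(2) unfolding reachable_within_def by blast
  moreover have "successively r (rev xs)"
    using \<open>successively r xs\<close> assms(1) by (auto intro: successively_mono dest: sympD)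
  ultimately show ?thesis
    unfolding reachable_within_def by (intro exI[of _ "rev xs"]) (auto simp: hd_rev last_rev)
qed

section \<open>Central elements of prime order\<close>

lemma (in group) ord_carrier_update:
  assumes "subgroup H G"
  shows "group.ord (G\<lparr>carrier := H\<rparr>) x = ord x"
  by (simp add: group.ord_def[OF subgroup_imp_group[OF assms]] nat_pow_def ord_def)

lemma (in group) subgroup_grp_center: "subgroup (grp_center G) G"
proof (rule subgroupI)
  show "grp_center G \<subseteq> carrier G" "grp_center G \<noteq> {}"
    unfolding grp_center_def by force+
next
  fix z w assume z: "z \<in> grp_center G" and w: "w \<in> grp_center G"
  have zc: "z \<in> carrier G" and z_comm: "\<And>g. g \<in> carrier G \<Longrightarrow> z \<otimes> g = g \<otimes> z"
    using z unfolding grp_center_def by auto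
  have "inv z \<otimes> g = g \<otimes> inv z" if "g \<in> carrier G" for g
  proof -
    have "inv z \<otimes> g = inv (inv g \<otimes> z)" using zc that by (simp add: inv_mult_group)
    also have "\<dots> = inv (z \<otimes> inv g)" using z_comm that by simp
    also have "\<dots> = g \<otimes> inv z" using zc that by (simp add: inv_mult_group)
    finally show ?thesis .
  qed
  then show "inv z \<in> grp_center G"
    using zc unfolding grp_center_def by simp
  have wc: "w \<in> carrier G" and w_comm: "\<And>g. g \<in> carrier G \<Longrightarrow> w \<otimes> g = g \<otimes> w"
    using w unfolding grp_center_def by auto
  have "z \<otimes> w \<otimes> g = g \<otimes> (z \<otimes> w)" if "g \<in> carrier G" for g
  proof -
    have "z \<otimes> w \<otimes> g = z \<otimes> (g \<otimes> w)" using zc wc that w_comm by (simp add: m_assoc)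
    also have "\<dots> = z \<otimes> g \<otimes> w" using zc wc that by (simp add: m_assoc)
    also have "\<dots> = g \<otimes> (z \<otimes> w)" using zc wc that by (simp add: z_comm[OF that] m_assoc)
    finally show ?thesis .
  qed
  then show "z \<otimes> w \<in> grp_center G"
    using zc wc unfolding grp_center_def by simp
qed

lemma (in group) exists_elem_of_prime_order:
  assumes "finite (carrier G)" and "Factorial_Ring.prime p" and "p dvd order G"
  shows "\<exists>x \<in> carrier G. ord x = p"
proof -
  have "order G = p ^ 1 * (order G div p)" using assms(3) by simp
  then obtain H where H: "subgroup H G" "card H = p"
    using sylow_thm[OF assms(2) group_axioms _ assms(1)] by (metis power_one_right)
  then have "H \<noteq> {\<one>}"
    using prime_ge_2_nat[OF assms(2)] by auto
  then obtain x where x: "x \<in> H" "x \<noteq> \<one>"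
    using subgroup.one_closed[OF H(1)] by blast
  have xc: "x \<in> carrier G" using subgroup.mem_carrier[OF H(1) x(1)] .
  interpret H: group "G\<lparr>carrier := H\<rparr>" using subgroup_imp_group[OF H(1)] .
  have "x [^] p = \<one>"
    using H.pow_order_eq_1[of x] x H(2) by (simp add: order_def nat_pow_def)
  then have "ord x dvd p" using pow_eq_id xc by simp
  moreover have "ord x \<noteq> 1" using ord_eq_1 xc x(2) by simp
  ultimately have "ord x = p" using assms(2) unfolding prime_nat_iff by blast
  then show ?thesis using xc by blast
qed

lemma (in group) exists_central_elem_of_prime_order:
  assumes "finite (carrier G)" and "Factorial_Ring.prime p" and "p dvd card (grp_center G)"
  shows "\<exists>x \<in> grp_center G. ord x = p"
proof -
  interpret Z: group "G\<lparr>carrier := grp_center G\<rparr>"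
    using subgroup_imp_group[OF subgroup_grp_center] .
  have "finite (grp_center G)"
    using assms(1) rev_finite_subset subgroup.subset[OF subgroup_grp_center] by blast
  then show ?thesis
    using Z.exists_elem_of_prime_order[of p] assms(2,3)
    by (simp add: order_def ord_carrier_update[OF subgroup_grp_center])
qed

section \<open>Cyclic subgroups and elements of prime order\<close>

context group
begin

abbreviation cyc :: "'a \<Rightarrow> 'a set" ("\<langle>_\<rangle>")
  where "\<langle>x\<rangle> \<equiv> generate G {x}"

lemma mem_cyc_self: "x \<in> \<langle>x\<rangle>"
  by (rule generate.incl) simp

lemma one_mem_cyc: "\<one> \<in> \<langle>x\<rangle>"
  by (rule generate.one)

lemma subgroup_cyc: "x \<in> carrier G \<Longrightarrow> subgroup \<langle>x\<rangle> G"
  by (rule generate_is_subgroup) simp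

lemma cyc_subset_carrier: "x \<in> carrier G \<Longrightarrow> \<langle>x\<rangle> \<subseteq> carrier G"
  using subgroup.subset[OF subgroup_cyc] .

lemma cyc_subset: "x \<in> carrier G \<Longrightarrow> y \<in> \<langle>x\<rangle> \<Longrightarrow> \<langle>y\<rangle> \<subseteq> \<langle>x\<rangle>"
  by (simp add: generate_subgroup_incl subgroup_cyc)

lemma mem_cyc_trans: "x \<in> carrier G \<Longrightarrow> y \<in> \<langle>x\<rangle> \<Longrightarrow> z \<in> \<langle>y\<rangle> \<Longrightarrow> z \<in> \<langle>x\<rangle>"
  using cyc_subset by blast

lemma nat_pow_mem_cyc: "x \<in> carrier G \<Longrightarrow> x [^] (k::nat) \<in> \<langle>x\<rangle>"
  by (induction k) (auto intro: generate.eng generate.one mem_cyc_self)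

lemma card_cyc: "x \<in> carrier G \<Longrightarrow> card \<langle>x\<rangle> = ord x"
  by (simp add: generate_pow_card)

lemma mem_subgroup_if_coprime_pows:
  assumes H: "subgroup H G" and y: "y \<in> carrier G"
    and m: "y [^] m \<in> H" and n: "y [^] n \<in> H" and mn: "coprime m (n::nat)"
  shows "y \<in> H"
proof (cases "m = 0")
  case True
  then have "n = 1" using mn by simp
  then show ?thesis using n y by simp
next
  case False
  then obtain s t where st: "m * s = n * t + 1"
    using bezout_nat[of m n] mn by (auto simp: coprime_iff_gcd_eq_1)
  have pow_closed: "(y [^] k) [^] l \<in> H" if "y [^] k \<in> H" for k l :: nat
    using that y nat_pow_mem_cyc[of "y [^] k" l] generate_subgroup_incl[OF _ H, of "{y [^] k}"]
    by auto
  have "y [^] (m * s) = y [^] (n * t) \<otimes> y"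
    using st y by (simp add: nat_pow_mult[symmetric])
  then have "y = inv (y [^] (n * t)) \<otimes> y [^] (m * s)"
    using y by (simp add: m_assoc[symmetric])
  moreover have "y [^] (m * s) \<in> H" "y [^] (n * t) \<in> H"
    using pow_closed m n y by (simp_all flip: nat_pow_pow)
  ultimately show ?thesis
    using subgroup.m_closed[OF H] subgroup.m_inv_closed[OF H] by metis
qed

definition of_prime_order :: "'a \<Rightarrow> bool" where
  "of_prime_order x \<longleftrightarrow> x \<in> carrier G \<and> Factorial_Ring.prime (ord x)"

lemma of_prime_order_not_one: "of_prime_order x \<Longrightarrow> x \<noteq> \<one>"
  unfolding of_prime_order_def by auto

definition of_composite_order :: "'a \<Rightarrow> bool" where
  "of_composite_order x \<longleftrightarrow> x \<in> carrier G \<and> x \<noteq> \<one> \<and> \<not> Factorial_Ring.prime (ord x)"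

end

locale finite_group = group +
  assumes finite_carrier: "finite (carrier G)"
begin

lemma mem_cyc_iff: "x \<in> carrier G \<Longrightarrow> y \<in> \<langle>x\<rangle> \<longleftrightarrow> (\<exists>k::nat. y = x [^] k)"
  using generate_pow_on_finite_carrier[OF finite_carrier] by auto

lemma ord_dvd_if_mem_cyc:
  assumes "x \<in> carrier G" and "y \<in> \<langle>x\<rangle>"
  shows "ord y dvd ord x"
proof -
  obtain k :: nat where k: "y = x [^] k" using assms mem_cyc_iff by blast
  have "y [^] ord x = x [^] (k * ord x)" using k assms(1) by (simp add: nat_pow_pow)
  also have "\<dots> = \<one>" using assms(1) pow_eq_id by simp
  finally show ?thesis using pow_eq_id k assms(1) by simp
qed

lemma cyc_eq_if_of_prime_order:
  assumes g: "of_prime_order g" and y: "y \<in> \<langle>g\<rangle>" "y \<noteq> \<one>"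
  shows "\<langle>y\<rangle> = \<langle>g\<rangle>" and "ord y = ord g"
proof -
  have gc: "g \<in> carrier G" and p: "Factorial_Ring.prime (ord g)"
    using g unfolding of_prime_order_def by auto
  have yc: "y \<in> carrier G" using cyc_subset_carrier[OF gc] y(1) by blast
  have "ord y dvd ord g" using ord_dvd_if_mem_cyc[OF gc y(1)] .
  moreover have "ord y \<noteq> 1" using ord_eq_1 yc y(2) by simp
  ultimately show ord: "ord y = ord g" using p unfolding prime_nat_iff by blast
  have "finite \<langle>g\<rangle>" using finite_subset[OF cyc_subset_carrier[OF gc] finite_carrier] .
  then show "\<langle>y\<rangle> = \<langle>g\<rangle>"
    by (rule card_subset_eq[OF _ cyc_subset[OF gc y(1)]]) (simp add: card_cyc gc yc ord)
qed

lemma mem_cyc_if_of_prime_order: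
  assumes "of_prime_order g" and "y \<in> \<langle>g\<rangle>" and "y \<noteq> \<one>"
  shows "g \<in> \<langle>y\<rangle>"
  using cyc_eq_if_of_prime_order(1)[OF assms] mem_cyc_self by simp

lemma of_prime_order_if_mem_cyc:
  assumes "of_prime_order g" and "y \<in> \<langle>g\<rangle>" and "y \<noteq> \<one>"
  shows "of_prime_order y"
proof -
  have "y \<in> carrier G"
    using assms(1,2) cyc_subset_carrier unfolding of_prime_order_def by blast
  then show ?thesis
    using assms(1) cyc_eq_if_of_prime_order(2)[OF assms] unfolding of_prime_order_def by simp
qed

lemma not_mem_cyc_if_of_composite_order:
  assumes "of_composite_order u" and "of_prime_order g"
  shows "u \<notin> \<langle>g\<rangle>"
  using assms of_prime_order_if_mem_cyc[OF assms(2)]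
  unfolding of_composite_order_def of_prime_order_def by blast

lemma exists_of_prime_order_mem_cyc:
  assumes "y \<in> carrier G" and "y \<noteq> \<one>"
  shows "\<exists>t. of_prime_order t \<and> t \<in> \<langle>y\<rangle>"
proof -
  have "ord y \<noteq> 1" using ord_eq_1 assms by simp
  then obtain p k where p: "Factorial_Ring.prime p" and k: "ord y = p * k"
    using prime_factor_nat by (metis dvdE)
  have "k \<noteq> 0" using k ord_ge_1[OF finite_carrier assms(1)] by auto
  then have "ord (y [^] k) = p" using ord_pow[OF assms(1)] k by simp
  then show ?thesis
    using p assms(1) nat_pow_mem_cyc unfolding of_prime_order_def by auto
qed

lemma exists_not_mem_subgroup_avoiding:
  assumes H: "subgroup H G" "H \<noteq> carrier G"
    and a: "of_prime_order a" and b: "of_prime_order b" and ab: "ord a \<noteq> ord b"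
  shows "\<exists>y \<in> carrier G. y \<notin> H \<and> (a \<notin> \<langle>y\<rangle> \<or> b \<notin> \<langle>y\<rangle>)"
proof -
  obtain y0 where "y0 \<in> carrier G" "y0 \<notin> H" using H subgroup.subset by blast
  then obtain y where y: "y \<in> carrier G" "y \<notin> H"
    and y_min: "\<And>z. z \<in> carrier G \<Longrightarrow> z \<notin> H \<Longrightarrow> ord y \<le> ord z"
    using ex_has_least_nat[of "\<lambda>z. z \<in> carrier G \<and> z \<notin> H" y0 ord] by blast
  have pow_mem: "y [^] ord c \<in> H" if c: "of_prime_order c" "c \<in> \<langle>y\<rangle>" for c
  proof (rule ccontr)
    assume "y [^] ord c \<notin> H"
    moreover have "ord c dvd ord y" using ord_dvd_if_mem_cyc[OF y(1) c(2)] .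
    moreover have "1 < ord c" using c(1) prime_gt_1_nat unfolding of_prime_order_def by blast
    moreover have "0 < ord y" using ord_ge_1[OF finite_carrier y(1)] by simp
    ultimately have "ord (y [^] ord c) < ord y"
      using ord_pow[OF y(1)] div_less_dividend by simp
    then show False
      using y_min[of "y [^] ord c"] y(1) \<open>y [^] ord c \<notin> H\<close> by simp
  qed
  have "coprime (ord a) (ord b)"
    using a b ab primes_coprime unfolding of_prime_order_def by blast
  then have "\<not> (a \<in> \<langle>y\<rangle> \<and> b \<in> \<langle>y\<rangle>)"
    using mem_subgroup_if_coprime_pows[OF H(1) y(1)] pow_mem a b y(2) by blast
  then show ?thesis using y by blast
qed

end

section \<open>Products of commuting elements of distinct prime orders\<close>

context group
begin

definition prime_product :: "'a \<Rightarrow> 'a \<Rightarrow> 'a \<Rightarrow> bool" where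
  "prime_product w g c \<longleftrightarrow> of_prime_order g \<and> of_prime_order c \<and> g \<otimes> c = c \<otimes> g
     \<and> ord g \<noteq> ord c \<and> w = g \<otimes> c"

lemma prime_product_sym: "prime_product w g c \<Longrightarrow> prime_product w c g"
  unfolding prime_product_def by auto

lemma prime_product_carrier: "prime_product w g c \<Longrightarrow> w \<in> carrier G"
  unfolding prime_product_def of_prime_order_def by auto

end

context finite_group
begin

lemma factor_mem_cyc_pow:
  assumes w: "prime_product w g c" and gk: "g [^] (k::nat) \<noteq> \<one>"
  shows "g \<in> \<langle>w [^] k\<rangle>"
proof -
  have gc: "g \<in> carrier G" and cc: "c \<in> carrier G" and pg: "Factorial_Ring.prime (ord g)"
    and pc: "Factorial_Ring.prime (ord c)" and comm: "g \<otimes> c = c \<otimes> g"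
    and ne: "ord g \<noteq> ord c" and wgc: "w = g \<otimes> c"
    using w unfolding prime_product_def of_prime_order_def by auto
  have wc: "w \<in> carrier G" using wgc gc cc by simp
  then have wk: "w [^] k \<in> carrier G" by simp
  have "(w [^] k) [^] ord c = w [^] (k * ord c)"
    using wc by (simp add: nat_pow_pow)
  also have "\<dots> = g [^] (k * ord c) \<otimes> c [^] (k * ord c)"
    using wgc pow_mult_distrib[OF comm gc cc] by simp
  also have "c [^] (k * ord c) = \<one>" using cc pow_eq_id by simp
  finally have pow_eq: "(w [^] k) [^] ord c = g [^] (k * ord c)"
    using gc by simp
  have "\<not> ord g dvd k" using gk pow_eq_id gc by simp
  moreover have "\<not> ord g dvd ord c" using pg pc ne primes_dvd_imp_eq by blast
  ultimately have "\<not> ord g dvd k * ord c" using pg prime_dvd_mult_iff by blast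
  then have "g [^] (k * ord c) \<noteq> \<one>" using pow_eq_id gc by simp
  then have "g \<in> \<langle>(w [^] k) [^] ord c\<rangle>"
    using mem_cyc_if_of_prime_order[OF _ nat_pow_mem_cyc[OF gc]] w pow_eq
    unfolding prime_product_def by simp
  then show ?thesis using mem_cyc_trans[OF wk nat_pow_mem_cyc[OF wk]] by blast
qed

lemma factor_mem_cyc:
  assumes "prime_product w g c"
  shows "g \<in> \<langle>w\<rangle>"
proof -
  have "of_prime_order g" and "w \<in> carrier G"
    using assms prime_product_carrier unfolding prime_product_def by auto
  then show ?thesis
    using factor_mem_cyc_pow[OF assms, of 1] of_prime_order_not_one
    unfolding of_prime_order_def by simp
qed

lemma mem_cyc_prime_product_cases:
  assumes w: "prime_product w g c" and x: "x \<in> \<langle>w\<rangle>" "x \<noteq> \<one>"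
  shows "x \<in> \<langle>g\<rangle> \<or> x \<in> \<langle>c\<rangle> \<or> (g \<in> \<langle>x\<rangle> \<and> c \<in> \<langle>x\<rangle>)"
proof -
  have gc: "g \<in> carrier G" and cc: "c \<in> carrier G" and comm: "g \<otimes> c = c \<otimes> g"
    and wgc: "w = g \<otimes> c"
    using w unfolding prime_product_def of_prime_order_def by auto
  obtain k :: nat where k: "x = w [^] k"
    using x(1) mem_cyc_iff prime_product_carrier[OF w] by blast
  then have xk: "x = g [^] k \<otimes> c [^] k"
    using wgc pow_mult_distrib[OF comm gc cc] by simp
  consider "g [^] k = \<one>" | "c [^] k = \<one>" | "g [^] k \<noteq> \<one>" "c [^] k \<noteq> \<one>" by blast
  then show ?thesis
  proof cases
    case 1
    then show ?thesis using xk cc nat_pow_mem_cyc by simp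
  next
    case 2
    then show ?thesis using xk gc nat_pow_mem_cyc by simp
  next
    case 3
    then show ?thesis
      using k factor_mem_cyc_pow[OF w] factor_mem_cyc_pow[OF prime_product_sym[OF w]] by simp
  qed
qed

lemma of_prime_order_mem_cyc_prime_product:
  assumes w: "prime_product w g c" and x: "of_prime_order x" "x \<in> \<langle>w\<rangle>"
  shows "x \<in> \<langle>g\<rangle> \<or> x \<in> \<langle>c\<rangle>"
proof -
  have "\<not> (g \<in> \<langle>x\<rangle> \<and> c \<in> \<langle>x\<rangle>)"
  proof
    assume "g \<in> \<langle>x\<rangle> \<and> c \<in> \<langle>x\<rangle>"
    then have "ord g = ord x" "ord c = ord x"
      using cyc_eq_if_of_prime_order(2)[OF x(1)] w of_prime_order_not_one
      unfolding prime_product_def by auto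
    then show False using w unfolding prime_product_def by simp
  qed
  then show ?thesis
    using mem_cyc_prime_product_cases[OF w x(2) of_prime_order_not_one[OF x(1)]] by blast
qed

lemma prime_product_mem_cyc:
  assumes "prime_product w g c" and "v \<in> carrier G" and "g \<in> \<langle>v\<rangle>" and "c \<in> \<langle>v\<rangle>"
  shows "w \<in> \<langle>v\<rangle>"
  using assms subgroup.m_closed[OF subgroup_cyc] unfolding prime_product_def by blast

lemma of_composite_order_prime_product:
  assumes w: "prime_product w g c"
  shows "of_composite_order w"
proof -
  have gc: "g \<in> carrier G" and cc: "c \<in> carrier G" and ne: "ord g \<noteq> ord c"
    and wgc: "w = g \<otimes> c"
    using w unfolding prime_product_def of_prime_order_def by auto
  have "w \<noteq> \<one>"
  proof
    assume "w = \<one>"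
    then have "inv c = g" using inv_equality[of g c] gc cc wgc by simp
    then show False using ne ord_inv[OF cc] by simp
  qed
  moreover have "\<not> Factorial_Ring.prime (ord w)"
  proof
    assume "Factorial_Ring.prime (ord w)"
    then have "of_prime_order w" using prime_product_carrier[OF w] unfolding of_prime_order_def by simp
    then have "ord g = ord w" "ord c = ord w"
      using cyc_eq_if_of_prime_order(2) factor_mem_cyc[OF w] factor_mem_cyc[OF prime_product_sym[OF w]]
        w of_prime_order_not_one unfolding prime_product_def by auto
    then show False using ne by simp
  qed
  ultimately show ?thesis
    using prime_product_carrier[OF w] unfolding of_composite_order_def by blast
qed

lemma factor_mem_cyc_if_common_prime:
  assumes w: "prime_product w g c" and v: "v \<in> carrier G"
    and x: "of_prime_order x" "x \<in> \<langle>w\<rangle>" "x \<in> \<langle>v\<rangle>"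
  shows "g \<in> \<langle>v\<rangle> \<or> c \<in> \<langle>v\<rangle>"
proof -
  have "x \<in> \<langle>g\<rangle> \<or> x \<in> \<langle>c\<rangle>" using of_prime_order_mem_cyc_prime_product[OF w x(1,2)] .
  then have "g \<in> \<langle>x\<rangle> \<or> c \<in> \<langle>x\<rangle>"
    using mem_cyc_if_of_prime_order of_prime_order_not_one[OF x(1)] w
    unfolding prime_product_def by blast
  then show ?thesis using mem_cyc_trans[OF v x(3)] by blast
qed

lemma cyc_eq_prime_products:
  assumes w1: "prime_product w1 g1 c1" and w2: "prime_product w2 g2 c2"
    and in1: "g2 \<in> \<langle>w1\<rangle>" "c2 \<in> \<langle>w1\<rangle>" and in2: "g1 \<in> \<langle>w2\<rangle> \<longleftrightarrow> c1 \<in> \<langle>w2\<rangle>"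
  shows "\<langle>w1\<rangle> = \<langle>w2\<rangle>"
proof -
  have w1c: "w1 \<in> carrier G" and w2c: "w2 \<in> carrier G"
    using w1 w2 prime_product_carrier by auto
  have "w2 \<in> \<langle>w1\<rangle>" using prime_product_mem_cyc[OF w2 w1c in1] .
  moreover have "g1 \<in> \<langle>w2\<rangle> \<or> c1 \<in> \<langle>w2\<rangle>"
    using factor_mem_cyc_if_common_prime[OF w1 w2c _ in1(1) factor_mem_cyc[OF w2]] w2
    unfolding prime_product_def by blast
  then have "w1 \<in> \<langle>w2\<rangle>" using prime_product_mem_cyc[OF w1 w2c] in2 by blast
  ultimately show ?thesis using cyc_subset w1c w2c by blast
qed

end

section \<open>Adjacency in the difference graph\<close>

lemma symp_diff_adj: "symp (diff_adj G)"
  unfolding symp_def diff_adj_def ipg_adj_def pg_adj_def by (auto simp: Int_commute)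

lemma diff_adj_sym: "diff_adj G x y \<Longrightarrow> diff_adj G y x"
  using symp_diff_adj by (rule sympD)

lemma diff_adj_in_diff_verts: "diff_adj G x y \<Longrightarrow> x \<in> diff_verts G"
  unfolding diff_verts_def diff_adj_def ipg_adj_def by auto

lemma diff_walk_if_reachable_within:
  assumes "reachable_within (diff_adj G) n u v" and "u \<in> diff_verts G"
  shows "\<exists>xs. diff_walk G xs \<and> hd xs = u \<and> last xs = v \<and> length xs \<le> Suc n"
proof -
  obtain xs where xs: "xs \<noteq> []" "hd xs = u" "last xs = v" "length xs \<le> Suc n"
    and adj: "successively (diff_adj G) xs"
    using assms(1) unfolding reachable_within_def by blast
  have "xs ! i \<in> diff_verts G" if i: "i < length xs" for i
  proof (cases i)
    case 0
    then show ?thesis using xs(1,2) assms(2) by (simp add: hd_conv_nth)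
  next
    case (Suc j)
    then have "diff_adj G (xs ! i) (xs ! j)"
      using diff_adj_sym successively_nth[OF adj, of j] i by simp
    then show ?thesis by (rule diff_adj_in_diff_verts)
  qed
  then have "set xs \<subseteq> diff_verts G" by (auto simp: in_set_conv_nth)
  then show ?thesis
    using xs adj unfolding diff_walk_def successively_conv_nth by blast
qed

context finite_group
begin

definition contains_prime_elems :: "'a \<Rightarrow> bool" where
  "contains_prime_elems u \<longleftrightarrow> (\<forall>g. of_prime_order g \<longrightarrow> g \<in> \<langle>u\<rangle>)"

lemma diff_adj_iff:
  "diff_adj G x y \<longleftrightarrow> x \<in> carrier G \<and> y \<in> carrier G \<and> (\<exists>t \<in> \<langle>x\<rangle> \<inter> \<langle>y\<rangle>. t \<noteq> \<one>)
     \<and> x \<notin> \<langle>y\<rangle> \<and> y \<notin> \<langle>x\<rangle>"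
proof (cases "x \<in> carrier G \<and> y \<in> carrier G")
  case True
  have pg: "pg_adj G x y \<longleftrightarrow> x \<noteq> y \<and> (y \<in> \<langle>x\<rangle> \<or> x \<in> \<langle>y\<rangle>)"
    using True by (simp add: pg_adj_def mem_cyc_iff)
  have ipg: "ipg_adj G x y \<longleftrightarrow> x \<noteq> y \<and> (x = \<one> \<or> y = \<one> \<or> (\<exists>t \<in> \<langle>x\<rangle> \<inter> \<langle>y\<rangle>. t \<noteq> \<one>))"
    using True one_mem_cyc unfolding ipg_adj_def by blast
  show ?thesis
    unfolding diff_adj_def pg ipg using True mem_cyc_self[of x] one_mem_cyc[of x] one_mem_cyc[of y]
    by auto
next
  case False
  then show ?thesis by (cases "x \<in> carrier G") (simp_all add: diff_adj_def ipg_adj_def)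
qed

lemma diff_adj_cong:
  assumes "diff_adj G x y" and "x' \<in> carrier G" and "\<langle>x'\<rangle> = \<langle>x\<rangle>"
  shows "diff_adj G x' y"
proof -
  have "x \<in> carrier G" "y \<in> carrier G" "x \<notin> \<langle>y\<rangle>"
    using assms(1) unfolding diff_adj_iff by auto
  then have "x' \<notin> \<langle>y\<rangle>"
    using assms(3) cyc_subset mem_cyc_self by blast
  then show ?thesis
    using assms unfolding diff_adj_iff by simp
qed

lemma of_composite_order_if_diff_adj:
  assumes "diff_adj G x y"
  shows "of_composite_order x"
proof -
  obtain t where t: "t \<in> \<langle>x\<rangle>" "t \<in> \<langle>y\<rangle>" "t \<noteq> \<one>"
    and x: "x \<in> carrier G" "x \<notin> \<langle>y\<rangle>" and y: "y \<in> carrier G"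
    using assms unfolding diff_adj_iff by auto
  have "x \<noteq> \<one>" using x(2) one_mem_cyc by auto
  moreover have "\<not> Factorial_Ring.prime (ord x)"
  proof
    assume "Factorial_Ring.prime (ord x)"
    then have "\<langle>t\<rangle> = \<langle>x\<rangle>"
      using cyc_eq_if_of_prime_order(1) t(1,3) x(1) unfolding of_prime_order_def by blast
    then show False
      using cyc_subset[OF y t(2)] mem_cyc_self x(2) by blast
  qed
  ultimately show ?thesis
    using x(1) unfolding of_composite_order_def by blast
qed

lemma diff_adj_prime_products:
  assumes w1: "prime_product w1 g1 c1" and w2: "prime_product w2 g2 c2"
    and in1: "g2 \<in> \<langle>w1\<rangle>" and out1: "c2 \<notin> \<langle>w1\<rangle>"
  shows "diff_adj G w1 w2"
proof -
  have w1c: "w1 \<in> carrier G" and w2c: "w2 \<in> carrier G"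
    using w1 w2 prime_product_carrier by auto
  have g2: "of_prime_order g2" and c2: "of_prime_order c2"
    using w2 unfolding prime_product_def by auto
  have "w2 \<notin> \<langle>w1\<rangle>"
    using out1 mem_cyc_trans[OF w1c] factor_mem_cyc[OF prime_product_sym[OF w2]] by blast
  moreover have "w1 \<notin> \<langle>w2\<rangle>"
  proof
    assume w12: "w1 \<in> \<langle>w2\<rangle>"
    \<comment> \<open>then all elements of prime order in \<open>\<langle>w1\<rangle>\<close>, among them \<open>g1\<close> and \<open>c1\<close>,
      would have the order of \<open>g2\<close>\<close>
    have "ord z = ord g2" if z: "of_prime_order z" "z \<in> \<langle>w1\<rangle>" for z
    proof -
      have "z \<notin> \<langle>c2\<rangle>"
        using mem_cyc_if_of_prime_order[OF c2] of_prime_order_not_one[OF z(1)]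
          mem_cyc_trans[OF w1c z(2)] out1 by blast
      moreover have "z \<in> \<langle>g2\<rangle> \<or> z \<in> \<langle>c2\<rangle>"
        using of_prime_order_mem_cyc_prime_product[OF w2 z(1)] mem_cyc_trans[OF w2c w12 z(2)] by blast
      ultimately show ?thesis
        using cyc_eq_if_of_prime_order(2)[OF g2] of_prime_order_not_one[OF z(1)] by blast
    qed
    then have "ord g1 = ord c1"
      using w1 factor_mem_cyc[OF w1] factor_mem_cyc[OF prime_product_sym[OF w1]]
      unfolding prime_product_def by metis
    then show False using w1 unfolding prime_product_def by simp
  qed
  ultimately show ?thesis
    unfolding diff_adj_iff using w1c w2c in1 factor_mem_cyc[OF w2] of_prime_order_not_one[OF g2] by blast
qed

lemma diff_adj_composite_prime_product:
  assumes u: "of_composite_order u" and w: "prime_product w g c"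
    and g_in: "g \<in> \<langle>u\<rangle>" and c_out: "c \<notin> \<langle>u\<rangle>"
  shows "diff_adj G u w"
proof -
  have uc: "u \<in> carrier G" and u1: "u \<noteq> \<one>" using u unfolding of_composite_order_def by auto
  have g: "of_prime_order g" and c: "of_prime_order c"
    using w unfolding prime_product_def by auto
  have "w \<notin> \<langle>u\<rangle>"
    using c_out mem_cyc_trans[OF uc] factor_mem_cyc[OF prime_product_sym[OF w]] by blast
  moreover have "u \<notin> \<langle>w\<rangle>"
    using mem_cyc_prime_product_cases[OF w _ u1] not_mem_cyc_if_of_composite_order[OF u] g c c_out
    by blast
  ultimately show ?thesis
    unfolding diff_adj_iff
    using uc prime_product_carrier[OF w] g_in factor_mem_cyc[OF w] of_prime_order_not_one[OF g] by blast
qed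

lemma of_composite_order_if_not_mem_cyc:
  assumes "contains_prime_elems u" and "y \<in> carrier G" and "y \<notin> \<langle>u\<rangle>"
  shows "of_composite_order y"
  using assms one_mem_cyc mem_cyc_self
  unfolding contains_prime_elems_def of_composite_order_def of_prime_order_def by blast

lemma diff_adj_if_contains_prime_elems:
  assumes u: "contains_prime_elems u" "u \<in> carrier G"
    and y: "y \<in> carrier G" "y \<notin> \<langle>u\<rangle>"
    and h: "of_prime_order h" "h \<notin> \<langle>y\<rangle>"
  shows "diff_adj G u y"
proof -
  have "y \<noteq> \<one>" using y(2) one_mem_cyc by auto
  then obtain t where t: "of_prime_order t" "t \<in> \<langle>y\<rangle>"
    using exists_of_prime_order_mem_cyc[OF y(1)] by blast
  have "t \<in> \<langle>u\<rangle>" using u(1) t(1) unfolding contains_prime_elems_def by blast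
  moreover have "u \<notin> \<langle>y\<rangle>"
    using u(1) h mem_cyc_trans[OF y(1)] unfolding contains_prime_elems_def by blast
  ultimately show ?thesis
    unfolding diff_adj_iff using u(2) y t of_prime_order_not_one[OF t(1)] by blast
qed

end

section \<open>Hubs\<close>

locale noncyclic_with_central_primes = finite_group +
  fixes a b
  assumes a_prime: "of_prime_order a" and b_prime: "of_prime_order b"
    and ord_a_ne_ord_b: "ord a \<noteq> ord b"
    and a_central: "a \<in> grp_center G" and b_central: "b \<in> grp_center G"
    and not_cyclic: "\<not> cyclic_group G"
begin

definition hub :: "'a \<Rightarrow> bool" where
  "hub w \<longleftrightarrow> (\<exists>g c. c \<in> {a, b} \<and> prime_product w g c)"

lemma cyc_ne_carrier: "x \<in> carrier G \<Longrightarrow> \<langle>x\<rangle> \<noteq> carrier G"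
  using not_cyclic unfolding cyclic_group_def by blast

lemma prime_product_central:
  assumes "of_prime_order g" and "c \<in> {a, b}" and "ord g \<noteq> ord c"
  shows "prime_product (g \<otimes> c) g c"
  using assms a_prime b_prime a_central b_central
  unfolding prime_product_def of_prime_order_def grp_center_def by auto

lemma exists_central_of_other_order: "\<exists>c \<in> {a, b}. ord c \<noteq> n"
  using ord_a_ne_ord_b by auto

lemma exists_hub_adj_if_split:
  assumes u: "of_composite_order u" and g: "of_prime_order g" "g \<in> \<langle>u\<rangle>"
    and h: "of_prime_order h" "h \<notin> \<langle>u\<rangle>" and gh: "ord g \<noteq> ord h"
    and central: "g \<in> {a, b} \<or> h \<in> {a, b}"
  shows "\<exists>w. hub w \<and> diff_adj G u w"
  using central
proof
  assume "g \<in> {a, b}"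
  then have "prime_product (h \<otimes> g) g h"
    using prime_product_sym prime_product_central[OF h(1)] gh by auto
  then show ?thesis
    using diff_adj_composite_prime_product[OF u _ g(2) h(2)] prime_product_sym \<open>g \<in> {a, b}\<close>
    unfolding hub_def by blast
next
  assume "h \<in> {a, b}"
  then have "prime_product (g \<otimes> h) g h"
    using prime_product_central[OF g(1)] gh by auto
  then show ?thesis
    using diff_adj_composite_prime_product[OF u _ g(2) h(2)] \<open>h \<in> {a, b}\<close>
    unfolding hub_def by blast
qed

lemma exists_hub_adj:
  assumes u: "of_composite_order u" and h: "of_prime_order h" "h \<notin> \<langle>u\<rangle>"
  shows "\<exists>w. hub w \<and> diff_adj G u w"
proof (cases "a \<in> \<langle>u\<rangle> \<and> b \<in> \<langle>u\<rangle>")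
  case True
  obtain c where "c \<in> {a, b}" "ord c \<noteq> ord h" using exists_central_of_other_order by blast
  then show ?thesis
    using exists_hub_adj_if_split[OF u _ _ h] True a_prime b_prime by auto
next
  case False
  then obtain c where c: "c \<in> {a, b}" "c \<notin> \<langle>u\<rangle>" by blast
  obtain t where t: "of_prime_order t" "t \<in> \<langle>u\<rangle>"
    using exists_of_prime_order_mem_cyc u unfolding of_composite_order_def by blast
  obtain c' where c': "c' \<in> {a, b}" "ord c' \<noteq> ord t" using exists_central_of_other_order by blast
  consider "ord t \<noteq> ord c" | "c' \<notin> \<langle>u\<rangle>" | "ord t = ord c" "c' \<in> \<langle>u\<rangle>" by blast
  then show ?thesis
  proof cases
    case 1
    then show ?thesis using exists_hub_adj_if_split[OF u t, of c] c a_prime b_prime by auto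
  next
    case 2
    then show ?thesis using exists_hub_adj_if_split[OF u t, of c'] c' a_prime b_prime by auto
  next
    case 3
    then show ?thesis using exists_hub_adj_if_split[OF u _ _ _ c(2), of c'] c c' a_prime b_prime by auto
  qed
qed

lemma exists_outside_avoiding_central:
  "x \<in> carrier G \<Longrightarrow> \<exists>y \<in> carrier G. y \<notin> \<langle>x\<rangle> \<and> (\<exists>c \<in> {a, b}. c \<notin> \<langle>y\<rangle>)"
  using exists_not_mem_subgroup_avoiding[OF subgroup_cyc cyc_ne_carrier a_prime b_prime ord_a_ne_ord_b]
  by blast

lemma diff_adj_outside_contains_prime_elems:
  assumes "contains_prime_elems u" "u \<in> carrier G" "y \<in> carrier G" "y \<notin> \<langle>u\<rangle>" "c \<in> {a, b}" "c \<notin> \<langle>y\<rangle>"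
  shows "diff_adj G u y"
  using diff_adj_if_contains_prime_elems[OF assms(1-4)] assms(5,6) a_prime b_prime by auto

lemma hubs_close:
  assumes "hub w1" and "hub w2"
  shows "\<langle>w1\<rangle> = \<langle>w2\<rangle> \<or> reachable_within (diff_adj G) 2 w1 w2"
proof -
  obtain g1 c1 g2 c2 where c: "c1 \<in> {a, b}" "c2 \<in> {a, b}"
    and w1: "prime_product w1 g1 c1" and w2: "prime_product w2 g2 c2"
    using assms unfolding hub_def by blast
  have adj_2: "reachable_within (diff_adj G) 2 x y" if "diff_adj G x y" for x y
    using reachable_within_mono[OF reachable_within_edge[of "diff_adj G", OF that]] by simp
  consider "(g2 \<in> \<langle>w1\<rangle>) \<noteq> (c2 \<in> \<langle>w1\<rangle>)" | "(g1 \<in> \<langle>w2\<rangle>) \<noteq> (c1 \<in> \<langle>w2\<rangle>)"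
    | "g2 \<in> \<langle>w1\<rangle>" "c2 \<in> \<langle>w1\<rangle>" "g1 \<in> \<langle>w2\<rangle> \<longleftrightarrow> c1 \<in> \<langle>w2\<rangle>"
    | "g1 \<in> \<langle>w2\<rangle>" "c1 \<in> \<langle>w2\<rangle>" "g2 \<in> \<langle>w1\<rangle> \<longleftrightarrow> c2 \<in> \<langle>w1\<rangle>"
    | "g2 \<notin> \<langle>w1\<rangle>" "c2 \<notin> \<langle>w1\<rangle>" "g1 \<notin> \<langle>w2\<rangle>" "c1 \<notin> \<langle>w2\<rangle>"
    by blast
  then show ?thesis
  proof cases
    case 1
    then have "diff_adj G w1 w2"
      using diff_adj_prime_products[OF w1 w2] diff_adj_prime_products[OF w1 prime_product_sym[OF w2]]
      by (cases "g2 \<in> \<langle>w1\<rangle>") simp_all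
    then show ?thesis using adj_2 by blast
  next
    case 2
    then have "diff_adj G w2 w1"
      using diff_adj_prime_products[OF w2 w1] diff_adj_prime_products[OF w2 prime_product_sym[OF w1]]
      by (cases "g1 \<in> \<langle>w2\<rangle>") simp_all
    then have "diff_adj G w1 w2" by (rule diff_adj_sym)
    then show ?thesis using adj_2 by blast
  next
    case 3
    then show ?thesis using cyc_eq_prime_products[OF w1 w2 3] by simp
  next
    case 4
    then show ?thesis using cyc_eq_prime_products[OF w2 w1 4] by simp
  next
    case 5
    have c1_in: "c1 \<in> \<langle>w1\<rangle>" and c2_in: "c2 \<in> \<langle>w2\<rangle>"
      using factor_mem_cyc[OF prime_product_sym[OF w1]] factor_mem_cyc[OF prime_product_sym[OF w2]] .
    then have "ord c1 \<noteq> ord c2" using c 5 ord_a_ne_ord_b by auto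
    then have m: "prime_product (c1 \<otimes> c2) c1 c2"
      using prime_product_central c a_prime b_prime by auto
    have "diff_adj G w1 (c1 \<otimes> c2)"
      using diff_adj_prime_products[OF w1 m c1_in 5(2)] .
    moreover have "diff_adj G (c1 \<otimes> c2) w2"
      using diff_adj_sym[OF diff_adj_prime_products[OF w2 prime_product_sym[OF m] c2_in 5(4)]] .
    ultimately show ?thesis using reachable_within_two[of "diff_adj G"] by blast
  qed
qed

lemma exists_hub_near:
  assumes "of_composite_order u"
  shows "\<exists>y w. (y = u \<or> diff_adj G u y) \<and> diff_adj G y w \<and> hub w"
proof (cases "contains_prime_elems u")
  case True
  have uc: "u \<in> carrier G" using assms unfolding of_composite_order_def by blast
  obtain y c where y: "y \<in> carrier G" "y \<notin> \<langle>u\<rangle>" and c: "c \<in> {a, b}" "c \<notin> \<langle>y\<rangle>"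
    using exists_outside_avoiding_central[OF uc] by blast
  have "diff_adj G u y" using diff_adj_outside_contains_prime_elems[OF True uc y c] .
  moreover obtain w where "hub w" "diff_adj G y w"
    using exists_hub_adj[OF of_composite_order_if_not_mem_cyc[OF True y]] c a_prime b_prime by blast
  ultimately show ?thesis by blast
next
  case False
  then show ?thesis
    using exists_hub_adj[OF assms] unfolding contains_prime_elems_def by blast
qed

lemma contains_prime_elems_close:
  assumes "contains_prime_elems u" "u \<in> carrier G" and "contains_prime_elems v" "v \<in> carrier G"
  shows "reachable_within (diff_adj G) 2 u v"
proof -
  have nested: "reachable_within (diff_adj G) 2 u v"
    if u: "contains_prime_elems u" "u \<in> carrier G" and v: "contains_prime_elems v" "v \<in> carrier G"
      and vu: "v \<in> \<langle>u\<rangle>" for u v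
  proof -
    obtain y c where y: "y \<in> carrier G" "y \<notin> \<langle>u\<rangle>" and c: "c \<in> {a, b}" "c \<notin> \<langle>y\<rangle>"
      using exists_outside_avoiding_central[OF u(2)] by blast
    have "y \<notin> \<langle>v\<rangle>" using y(2) cyc_subset[OF u(2) vu] by blast
    then have "diff_adj G u y" "diff_adj G y v"
      using diff_adj_outside_contains_prime_elems[OF u y c]
        diff_adj_sym[OF diff_adj_outside_contains_prime_elems[OF v y(1) _ c]] by auto
    then show ?thesis using reachable_within_two[of "diff_adj G"] by blast
  qed
  consider "v \<in> \<langle>u\<rangle>" | "u \<in> \<langle>v\<rangle>" | "u \<notin> \<langle>v\<rangle>" "v \<notin> \<langle>u\<rangle>" by blast
  then show ?thesis
  proof cases
    case 1
    then show ?thesis using nested[OF assms] by blast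
  next
    case 2
    then show ?thesis using reachable_within_sym[OF symp_diff_adj nested[OF assms(3,4,1,2)]] by blast
  next
    case 3
    have "a \<in> \<langle>u\<rangle> \<inter> \<langle>v\<rangle>" "a \<noteq> \<one>"
      using assms(1,3) a_prime of_prime_order_not_one unfolding contains_prime_elems_def by auto
    then have "diff_adj G u v" unfolding diff_adj_iff using assms(2,4) 3 by blast
    then show ?thesis using reachable_within_mono[OF reachable_within_edge[of "diff_adj G"]] by simp
  qed
qed

lemma hubs_join:
  assumes "hub w1" and "hub w2" and x: "diff_adj G x w1" and z: "diff_adj G w2 z"
  shows "reachable_within (diff_adj G) 4 x z"
  using hubs_close[OF assms(1,2)]
proof
  assume "\<langle>w1\<rangle> = \<langle>w2\<rangle>"
  moreover have "w2 \<in> carrier G" using z unfolding diff_adj_iff by blast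
  ultimately have "diff_adj G w2 x"
    using diff_adj_cong[OF diff_adj_sym[OF x]] by simp
  then have "reachable_within (diff_adj G) 2 x z"
    using reachable_within_two[of "diff_adj G", OF diff_adj_sym z] by blast
  then show ?thesis using reachable_within_mono[of _ 2 x z 4] by simp
next
  assume "reachable_within (diff_adj G) 2 w1 w2"
  then have "reachable_within (diff_adj G) (Suc 2 + 1) x z"
    using reachable_within_trans[OF reachable_within_Cons[of "diff_adj G", OF x]
        reachable_within_edge[of "diff_adj G", OF z]] by blast
  then show ?thesis by simp
qed

lemma reachable_within_5_if_composite:
  assumes u: "of_composite_order u" and v: "of_composite_order v"
  shows "reachable_within (diff_adj G) 5 u v"
proof -
  have uc: "u \<in> carrier G" and vc: "v \<in> carrier G"
    using u v unfolding of_composite_order_def by auto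
  have one_sided: "reachable_within (diff_adj G) 5 u v"
    if u: "of_composite_order u" and v: "of_composite_order v" and "\<not> contains_prime_elems v" for u v
  proof -
    obtain y w1 where y: "y = u \<or> diff_adj G u y" "diff_adj G y w1" "hub w1"
      using exists_hub_near[OF u] by blast
    obtain w2 where "hub w2" "diff_adj G v w2"
      using exists_hub_adj[OF v] \<open>\<not> contains_prime_elems v\<close> unfolding contains_prime_elems_def by blast
    then have "reachable_within (diff_adj G) 4 y v"
      using hubs_join[OF y(3) _ y(2) diff_adj_sym] by blast
    then show ?thesis
      using y(1) reachable_within_Cons[of "diff_adj G" u y 4] reachable_within_mono[of _ 4 u v 5]
      by auto
  qed
  consider "contains_prime_elems u" "contains_prime_elems v" | "\<not> contains_prime_elems v"
    | "\<not> contains_prime_elems u" by blast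
  then show ?thesis
  proof cases
    case 1
    then show ?thesis
      using contains_prime_elems_close[OF 1(1) uc 1(2) vc] reachable_within_mono[of _ 2 u v 5] by simp
  next
    case 2
    then show ?thesis using one_sided[OF u v] by blast
  next
    case 3
    then show ?thesis using reachable_within_sym[OF symp_diff_adj one_sided[OF v u]] by blast
  qed
qed

lemma diff_verts_eq: "diff_verts G = {u. of_composite_order u}"
proof
  show "diff_verts G \<subseteq> {u. of_composite_order u}"
    using of_composite_order_if_diff_adj unfolding diff_verts_def by blast
  show "{u. of_composite_order u} \<subseteq> diff_verts G"
  proof
    fix u assume u: "u \<in> {u. of_composite_order u}"
    then obtain y w where "y = u \<or> diff_adj G u y" "diff_adj G y w"
      using exists_hub_near by blast
    then show "u \<in> diff_verts G" by (metis diff_adj_in_diff_verts)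
  qed
qed

lemma diff_graph_diam_le_5: "diff_diam_le G 5"
  unfolding diff_diam_le_def
proof (intro ballI)
  fix u v assume "u \<in> diff_verts G" and "v \<in> diff_verts G"
  then show "\<exists>xs. diff_walk G xs \<and> hd xs = u \<and> last xs = v \<and> length xs \<le> Suc 5"
    using diff_walk_if_reachable_within[OF reachable_within_5_if_composite] diff_verts_eq by simp
qed

lemma diff_graph_connected: "diff_connected G"
proof -
  have "prime_product (a \<otimes> b) a b"
    using prime_product_central[OF a_prime _ ord_a_ne_ord_b] by simp
  then have "diff_verts G \<noteq> {}"
    using of_composite_order_prime_product diff_verts_eq by blast
  then show ?thesis
    using diff_graph_diam_le_5 unfolding diff_connected_def diff_diam_le_def by meson
qed

end

theorem theorem4p11:
  fixes G :: "('a, 'b) monoid_scheme"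
  assumes "group G"
    and "finite (carrier G)"
    and "\<not> cyclic_group G"
    and "\<not> (\<exists>m n. odd m \<and> n \<ge> 3 \<and> G \<cong> (integer_mod_group m \<times>\<times> quaternion_group n))"
    and "card {p::nat. Factorial_Ring.prime p \<and> p dvd card (grp_center G)} \<ge> 2"
  shows "diff_connected G \<and> diff_diam_le G 5"
proof -
  interpret finite_group G
    using assms(1,2) by (simp add: finite_group_def finite_group_axioms_def)
  let ?P = "{p::nat. Factorial_Ring.prime p \<and> p dvd card (grp_center G)}"
  have "finite ?P" using assms(5) by (intro card_ge_0_finite) simp
  moreover have "\<not> card ?P \<le> Suc 0" using assms(5) by simp
  ultimately obtain p q where p: "p \<in> ?P" and q: "q \<in> ?P" and "p \<noteq> q"
    using card_le_Suc0_iff_eq by blast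
  obtain a where "a \<in> grp_center G" "ord a = p"
    using exists_central_elem_of_prime_order[OF finite_carrier] p by blast
  moreover obtain b where "b \<in> grp_center G" "ord b = q"
    using exists_central_elem_of_prime_order[OF finite_carrier] q by blast
  ultimately interpret noncyclic_with_central_primes G a b
    using p q \<open>p \<noteq> q\<close> assms(3) subgroup.subset[OF subgroup_grp_center]
    by unfold_locales (auto simp: of_prime_order_def)
  show ?thesis using diff_graph_connected diff_graph_diam_le_5 by blast
qed

end
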